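(* Let $Q$ be a measure on a measurable space $\mathcal{X}$, let $\beta>0$, and let $l,\tilde l:\mathcal{X}\to\mathbb{R}$ be measurable functions such that $0<\int e^{-\beta l}\,dQ<\infty$ and $0<\int e^{-\beta\tilde l}\,dQ<\infty$. Let $P(dx)\propto Q(dx)e^{-\beta l(x)}$ and $\tilde P(dx)\propto Q(dx)e^{-\beta\tilde l(x)}$ be the corresponding Gibbs probability measures. If $\sup_{x}|l(x)-\tilde l(x)|\le\epsilon$, then \[ D_{\mathrm{KL}}(P\|\tilde P)\le2\beta\epsilon\cdot\left\{1\wedge\left(e^{2\beta\epsilon}-1\right)\right\}. \]
   Context: $D_{\mathrm{KL}}$ denotes the Kullback–Leibler divergence (natural logarithm) and $a\wedge b=\min(a,b)$. *)

theory Defs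
  imports "HOL-Probability.Probability"
begin

definition gibbs :: "'a measure \<Rightarrow> real \<Rightarrow> ('a \<Rightarrow> real) \<Rightarrow> 'a measure" where
  "gibbs Q \<beta> l = density Q (\<lambda>x. ennreal (exp (- \<beta> * l x)) /
                     (\<integral>\<^sup>+ y. ennreal (exp (- \<beta> * l y)) \<partial>Q))"

text \<open>KL divergence with natural log; note the library's KL_divergence b M N is D(N || M).\<close>
definition DKL :: "'a measure \<Rightarrow> 'a measure \<Rightarrow> real" where
  "DKL P P' = KL_divergence (exp 1) P' P"

end

theory Submission
  imports Defs
begin

text \<open>Put \<open>g = lt - l\<close> and \<open>h = \<beta> g\<close>, so that \<open>|h| \<le> a = \<beta> \<epsilon>\<close>. Gibbs measures compose:
  \<open>gibbs Q \<beta> lt\<close> is the Gibbs measure with potential \<open>g\<close> over \<open>P = gibbs Q \<beta> l\<close>, hence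
  \<open>D(P || gibbs Q \<beta> lt) = E h + ln E (exp (-h))\<close> with expectations under \<open>P\<close>. Both terms are at
  most \<open>a\<close>; alternatively \<open>ln x \<le> x - 1\<close> bounds the divergence by \<open>E (h + exp (-h) - 1)\<close>, which
  is pointwise at most \<open>a (exp a - 1) \<le> 2a (exp (2a) - 1)\<close>.\<close>

lemma add_exp_neg_minus_one_le:
  fixes a h :: real
  assumes "\<bar>h\<bar> \<le> a"
  shows "h + exp (- h) - 1 \<le> a * (exp a - 1)"
proof -
  have "exp (- h) * (1 + h) \<le> exp (- h) * exp h"
    by (rule mult_left_mono) auto
  then have "h + exp (- h) - 1 \<le> h * (1 - exp (- h))"
    by (simp add: algebra_simps flip: exp_add)
  also have "\<dots> \<le> a * (exp a - 1)"
  proof (cases "h \<ge> 0")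
    case True
    have "1 - exp (- h) \<le> 1 - exp (- a)"
      using assms by simp
    also have "\<dots> \<le> exp a - 1"
      using exp_ge_add_one_self[of a] exp_ge_add_one_self[of "- a"] by linarith
    finally show ?thesis
      using True assms by (intro mult_mono) auto
  next
    case False
    have "h * (1 - exp (- h)) = (- h) * (exp (- h) - 1)"
      by (simp add: algebra_simps)
    also have "\<dots> \<le> a * (exp a - 1)"
      using False assms by (intro mult_mono) auto
    finally show ?thesis .
  qed
  finally show ?thesis .
qed

lemma min_mult_exp_minus_one_le:
  fixes a :: real
  assumes "0 \<le> a"
  shows "min (2 * a) (a * (exp a - 1)) \<le> 2 * a * min 1 (exp (2 * a) - 1)"
proof -
  have "a * (exp a - 1) \<le> 2 * a * (exp (2 * a) - 1)"
    using assms by (intro mult_mono) auto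
  then show ?thesis
    by (simp add: min_def)
qed

lemma ennreal_divide_mult_divide_divide:
  fixes a b c z :: ennreal
  assumes "0 < z" "z < \<infinity>"
  shows "a / z * (b / (c / z)) = a * b / c"
proof -
  have "inverse (inverse z) = z"
    using one_divide_one_divide_ennreal[of z] by (simp add: divide_ennreal_def)
  moreover have "inverse (c * inverse z) = inverse c * inverse (inverse z)"
    using assms by (intro ennreal_inverse_mult') (auto simp: ennreal_inverse_positive less_top[symmetric])
  ultimately have "a / z * (b / (c / z)) = a * b * inverse c * (z * inverse z)"
    by (simp add: divide_ennreal_def ac_simps)
  also have "z * inverse z = 1"
    using assms ennreal_divide_self[of z] by (simp add: divide_ennreal_def)
  finally show ?thesis
    by (simp add: divide_ennreal_def)
qed

lemma prob_space_gibbs: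
  assumes [measurable]: "l \<in> borel_measurable Q"
    and "0 < (\<integral>\<^sup>+ x. ennreal (exp (- \<beta> * l x)) \<partial>Q)"
    and "(\<integral>\<^sup>+ x. ennreal (exp (- \<beta> * l x)) \<partial>Q) < \<infinity>"
  shows "prob_space (gibbs Q \<beta> l)"
proof
  show "emeasure (gibbs Q \<beta> l) (space (gibbs Q \<beta> l)) = 1"
    using assms by (simp add: gibbs_def emeasure_density nn_integral_divide)
qed

lemma gibbs_gibbs:
  assumes [measurable]: "l \<in> borel_measurable Q" "g \<in> borel_measurable Q"
    and "0 < (\<integral>\<^sup>+ x. ennreal (exp (- \<beta> * l x)) \<partial>Q)"
    and "(\<integral>\<^sup>+ x. ennreal (exp (- \<beta> * l x)) \<partial>Q) < \<infinity>"
  shows "gibbs (gibbs Q \<beta> l) \<beta> g = gibbs Q \<beta> (\<lambda>x. l x + g x)"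
proof -
  have weight_add: "ennreal (exp (- (\<beta> * l x))) * ennreal (exp (- (\<beta> * g x)))
      = ennreal (exp (- (\<beta> * (l x + g x))))" for x
    by (simp add: algebra_simps flip: ennreal_mult exp_add)
  have "(\<integral>\<^sup>+ x. ennreal (exp (- \<beta> * g x)) \<partial>gibbs Q \<beta> l)
      = (\<integral>\<^sup>+ x. ennreal (exp (- \<beta> * l x)) * ennreal (exp (- \<beta> * g x)) \<partial>Q)
        / (\<integral>\<^sup>+ x. ennreal (exp (- \<beta> * l x)) \<partial>Q)"
    unfolding gibbs_def
    by (simp add: nn_integral_density ennreal_divide_times ennreal_times_divide nn_integral_divide)
  then show ?thesis
    using assms unfolding gibbs_def
    by (simp add: density_density_eq ennreal_divide_mult_divide_divide weight_add)
qed

lemma (in prob_space) DKL_gibbs: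
  assumes [measurable]: "g \<in> borel_measurable M"
    and int_g: "integrable M g" and int_exp: "integrable M (\<lambda>x. exp (- \<beta> * g x))"
  shows "DKL M (gibbs M \<beta> g) = \<beta> * (\<integral>x. g x \<partial>M) + ln (\<integral>x. exp (- \<beta> * g x) \<partial>M)"
proof -
  define z where "z = (\<integral>x. exp (- \<beta> * g x) \<partial>M)"
  have "z \<noteq> 0"
    using int_exp integral_nonneg_eq_0_iff_AE[of M "\<lambda>x. exp (- \<beta> * g x)"] AE_False emeasure_space_1
    by (simp add: z_def)
  then have z_pos: "0 < z"
    unfolding z_def by (simp add: less_le)
  define r where "r x = exp (- \<beta> * g x) / z" for x
  have r_pos: "0 < r x" for x
    using z_pos by (simp add: r_def)
  have "gibbs M \<beta> g = density M r"
    using int_exp z_pos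
    by (simp add: gibbs_def r_def z_def nn_integral_eq_integral divide_ennreal)
  then have "DKL M (gibbs M \<beta> g) = KL_divergence (exp 1) (density M r) (density M (\<lambda>_. ennreal 1))"
    by (simp add: DKL_def density_1)
  also have "\<dots> = (\<integral>x. 1 * log (exp 1) (1 / r x) \<partial>M)"
    using r_pos by (intro KL_density_density) (auto simp: r_def less_imp_le)
  also have "\<dots> = (\<integral>x. \<beta> * g x + ln z \<partial>M)"
    using z_pos by (simp add: log_def r_def ln_div add.commute)
  also have "\<dots> = \<beta> * (\<integral>x. g x \<partial>M) + ln z"
    using int_g by (simp add: prob_space)
  finally show ?thesis
    unfolding z_def .
qed

lemma (in prob_space) integral_plus_ln_integral_exp_neg_le:
  fixes h :: "'a \<Rightarrow> real"
  assumes [measurable]: "h \<in> borel_measurable M"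
    and bounded: "\<And>x. x \<in> space M \<Longrightarrow> \<bar>h x\<bar> \<le> a"
  shows "(\<integral>x. h x \<partial>M) + ln (\<integral>x. exp (- h x) \<partial>M) \<le> min (2 * a) (a * (exp a - 1))"
proof -
  define E where "E = (\<integral>x. exp (- h x) \<partial>M)"
  have int_h: "integrable M h"
    using bounded by (intro integrable_const_bound[where B = a]) auto
  have int_exp: "integrable M (\<lambda>x. exp (- h x))"
    using bounded by (intro integrable_const_bound[where B = "exp a"]) (auto simp: abs_le_iff)
  have "exp (- a) \<le> E"
    unfolding E_def using bounded by (intro integral_ge_const int_exp AE_I2) (auto simp: abs_le_iff)
  then have E_pos: "0 < E"
    using exp_gt_zero less_le_trans by blast
  have "(\<integral>x. h x \<partial>M) \<le> a"
    using bounded by (intro integral_le_const int_h AE_I2) (auto simp: abs_le_iff)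
  moreover have "ln E \<le> a"
  proof -
    have "E \<le> exp a"
      unfolding E_def using bounded by (intro integral_le_const int_exp AE_I2) (auto simp: abs_le_iff)
    then show ?thesis
      using E_pos by (metis exp_gt_zero ln_exp ln_le_cancel_iff)
  qed
  moreover have "(\<integral>x. h x \<partial>M) + ln E \<le> a * (exp a - 1)"
  proof -
    have "(\<integral>x. h x \<partial>M) + ln E \<le> (\<integral>x. h x \<partial>M) + E - 1"
      using ln_le_minus_one[OF E_pos] by simp
    also have "\<dots> = (\<integral>x. h x + exp (- h x) - 1 \<partial>M)"
      unfolding E_def using int_h int_exp by (simp add: prob_space)
    also have "\<dots> \<le> a * (exp a - 1)"
      using bounded add_exp_neg_minus_one_le
      by (intro integral_le_const AE_I2) (auto intro!: int_h int_exp)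
    finally show ?thesis .
  qed
  ultimately show ?thesis
    unfolding E_def by simp
qed

theorem lemma17:
  fixes Q :: "'a measure" and \<beta> \<epsilon> :: real and l lt :: "'a \<Rightarrow> real"
  assumes "\<beta> > 0"
    and "l \<in> borel_measurable Q" and "lt \<in> borel_measurable Q"
    and "0 < (\<integral>\<^sup>+ x. ennreal (exp (- \<beta> * l x)) \<partial>Q)"
    and "(\<integral>\<^sup>+ x. ennreal (exp (- \<beta> * l x)) \<partial>Q) < \<infinity>"
    and "0 < (\<integral>\<^sup>+ x. ennreal (exp (- \<beta> * lt x)) \<partial>Q)"
    and "(\<integral>\<^sup>+ x. ennreal (exp (- \<beta> * lt x)) \<partial>Q) < \<infinity>"
    and "\<forall>x\<in>space Q. \<bar>l x - lt x\<bar> \<le> \<epsilon>"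
  shows "DKL (gibbs Q \<beta> l) (gibbs Q \<beta> lt)
           \<le> 2 * \<beta> * \<epsilon> * min 1 (exp (2 * \<beta> * \<epsilon>) - 1)"
proof -
  define P where "P = gibbs Q \<beta> l"
  define g where "g x = lt x - l x" for x
  define a where "a = \<beta> * \<epsilon>"
  note [measurable] = assms(2,3)
  interpret P: prob_space P
    unfolding P_def using assms(2,4,5) by (intro prob_space_gibbs)
  have [measurable]: "g \<in> borel_measurable Q"
    unfolding g_def by measurable
  then have [measurable]: "g \<in> borel_measurable P"
    by (simp add: P_def gibbs_def)
  have bounded: "\<bar>\<beta> * g x\<bar> \<le> a" if "x \<in> space P" for x
    using that assms(1,8) by (auto simp: P_def gibbs_def g_def a_def abs_mult abs_minus_commute)
  have "gibbs Q \<beta> lt = gibbs P \<beta> g"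
    using gibbs_gibbs[of l Q g \<beta>] assms(2,4,5) by (simp add: P_def g_def)
  moreover have "integrable P g"
    using bounded assms(1) P.integrable_const_bound[of "\<lambda>x. \<beta> * g x" a] by simp
  moreover have "integrable P (\<lambda>x. exp (- \<beta> * g x))"
    using bounded by (intro P.integrable_const_bound[where B = "exp a"]) (auto simp: abs_le_iff)
  ultimately have "DKL P (gibbs Q \<beta> lt) = \<beta> * (\<integral>x. g x \<partial>P) + ln (\<integral>x. exp (- \<beta> * g x) \<partial>P)"
    by (simp add: P.DKL_gibbs)
  also have "\<dots> \<le> min (2 * a) (a * (exp a - 1))"
    using P.integral_plus_ln_integral_exp_neg_le[of "\<lambda>x. \<beta> * g x" a] bounded by simp
  also have "\<dots> \<le> 2 * a * min 1 (exp (2 * a) - 1)"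
    using bounded P.not_empty by (intro min_mult_exp_minus_one_le) force
  finally show ?thesis
    unfolding P_def a_def by (simp add: mult.assoc)
qed

end
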